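(* Let $\{S_0,S_1,\dots,S_m\}$ be an admissible cover of $S$ and $\ell\in\{0,1,\dots,m\}$. If $\mathbf r,\mathbf s\in\mathbb V_{\mathbb F}\big(\bigcup_{i=0}^{\ell-1}S_i\big)$, then for every $c_\alpha(\mathbf a)\in\bigcup_{i=0}^{\ell}S_i$ we have $L_{\mathbf a=\mathbf r}(c_\alpha)=L_{\mathbf a=\mathbf s}(c_\alpha)$ as polynomials in $\mathbf a$; in particular $c_\alpha(\mathbf r)=L_{\mathbf a=\mathbf s}(c_\alpha)(\mathbf r)$.
   Context: Let $\mathbb F$ be a field of characteristic zero, $\mathbf x=(x_1,\dots,x_n)$ variables and $\mathbf a=(a_1,\dots,a_n)$ new indeterminates. For $p,q\in\mathbb F[\mathbf x]$ write $p(\mathbf x+\mathbf a)-q(\mathbf x)=\sum_{\alpha\in\mathbb N^n}c_\alpha(\mathbf a)\mathbf x^\alpha$ with $c_\alpha(\mathbf a)\in\mathbb F[\mathbf a]$, and let $S$ be the family of nonzero coefficients $c_\alpha(\mathbf a)$ (indexed by $\alpha$). On $\mathbb N^n$, $\beta\ge\alpha$ means componentwise $\ge$, and $\beta>\alpha$ means $\beta\ge\alpha$, $\beta\ne\alpha$. A cover of $S$ is a collection $\{S_0,\dots,S_m\}$ of subsets whose union is $S$; it is admissible if (1) every polynomial in $S_0$ has total degree at most one in $\mathbf a$; and (2) for every $\ell=1,\dots,m$, if $c_\alpha\in S_\ell$ then $c_\beta\in\bigcup_{i=0}^{\ell-1}S_i$ for all $\beta>\alpha$ with $c_\beta\neq0$.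 For $f\in\mathbb F[\mathbf a]$ with homogeneous decomposition $f=\sum_{i\ge0}H^i(f)$ in $\mathbf a$ and $\mathbf s\in\mathbb F^n$, the linearization is $L_{\mathbf a=\mathbf s}(f)=H^0(f)+H^1(f)(\mathbf a)+\sum_{i\ge2}H^i(f)(\mathbf s)$. For $P\subseteq\mathbb F[\mathbf a]$, $\mathbb V_{\mathbb F}(P)$ is the set of common zeros of $P$ in $\mathbb F^n$ ($\mathbb V_{\mathbb F}(\varnothing)=\mathbb F^n$). *)

theory Defs
  imports Main "HOL-Library.Poly_Mapping"
begin

text \<open>Multivariate polynomials over a field 'a in variables indexed by a finite type 'v
  (so n = CARD('v)) are represented as finitely supported maps from exponent vectors
  (exponent vectors) to coefficients.\<close>

type_synonym ('v,'a) mpoly = "('v \<Rightarrow>\<^sub>0 nat) \<Rightarrow>\<^sub>0 'a"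

definition mvar :: "'v \<Rightarrow> ('v,'a::comm_ring_1) mpoly" where
  "mvar i = Poly_Mapping.single (Poly_Mapping.single i 1) 1"

definition mconst :: "'a \<Rightarrow> ('v,'a::zero) mpoly" where
  "mconst c = Poly_Mapping.single 0 c"

definition meval :: "('v::finite,'a::comm_ring_1) mpoly \<Rightarrow> ('v \<Rightarrow> 'a) \<Rightarrow> 'a" where
  "meval f s = (\<Sum>m\<in>Poly_Mapping.keys f. Poly_Mapping.lookup f m * (\<Prod>i\<in>UNIV. s i ^ Poly_Mapping.lookup (m::'v \<Rightarrow>\<^sub>0 nat) i))"

definition mdeg :: "('v::finite \<Rightarrow>\<^sub>0 nat) \<Rightarrow> nat" where
  "mdeg m = (\<Sum>i\<in>UNIV. Poly_Mapping.lookup m i)"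

definition total_deg_le :: "('v::finite,'a::zero) mpoly \<Rightarrow> nat \<Rightarrow> bool" where
  "total_deg_le f d \<longleftrightarrow> (\<forall>m\<in>Poly_Mapping.keys f. mdeg m \<le> d)"

definition hcomp :: "nat \<Rightarrow> ('v::finite,'a::comm_ring_1) mpoly \<Rightarrow> ('v,'a) mpoly" where
  "hcomp k f = (\<Sum>m\<in>{m\<in>Poly_Mapping.keys f. mdeg m = k}. Poly_Mapping.single m (Poly_Mapping.lookup f m))"

text \<open>Linearization L_{a=s}(f) = H^0(f) + H^1(f)(a) + sum_{k>=2} H^k(f)(s); the sum ranges
  over the finitely many degrees k >= 2 that occur in f (all other components vanish).\<close>
definition linearize :: "('v::finite \<Rightarrow> 'a::comm_ring_1) \<Rightarrow> ('v,'a) mpoly \<Rightarrow> ('v,'a) mpoly" where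
  "linearize s f = hcomp 0 f + hcomp 1 f
     + mconst (\<Sum>k\<in>{k\<in>mdeg ` Poly_Mapping.keys f. 2 \<le> k}. meval (hcomp k f) s)"

definition zero_set :: "('v::finite,'a::comm_ring_1) mpoly set \<Rightarrow> ('v \<Rightarrow> 'a) set" where
  "zero_set P = {s. \<forall>f\<in>P. meval f s = 0}"

text \<open>p(x + a) as a polynomial in x with coefficients in F[a].\<close>
definition shift_poly :: "('v::finite,'a::comm_ring_1) mpoly \<Rightarrow> ('v, ('v,'a) mpoly) mpoly" where
  "shift_poly p = (\<Sum>\<beta>\<in>Poly_Mapping.keys p. mconst (mconst (Poly_Mapping.lookup p \<beta>))
        * (\<Prod>i\<in>UNIV. (mvar i + mconst (mvar i)) ^ Poly_Mapping.lookup \<beta> i))"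

definition lift_poly :: "('v::finite,'a::comm_ring_1) mpoly \<Rightarrow> ('v, ('v,'a) mpoly) mpoly" where
  "lift_poly q = (\<Sum>\<beta>\<in>Poly_Mapping.keys q. Poly_Mapping.single \<beta> (mconst (Poly_Mapping.lookup q \<beta>)))"

definition cf :: "('v::finite,'a::comm_ring_1) mpoly \<Rightarrow> ('v,'a) mpoly \<Rightarrow> ('v \<Rightarrow>\<^sub>0 nat) \<Rightarrow> ('v,'a) mpoly" where
  "cf p q \<alpha> = Poly_Mapping.lookup (shift_poly p - lift_poly q) \<alpha>"

definition exp_ge :: "('v \<Rightarrow>\<^sub>0 nat) \<Rightarrow> ('v \<Rightarrow>\<^sub>0 nat) \<Rightarrow> bool" where
  "exp_ge \<beta> \<alpha> \<longleftrightarrow> (\<forall>i. Poly_Mapping.lookup \<alpha> i \<le> Poly_Mapping.lookup \<beta> i)"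

definition exp_gt :: "('v \<Rightarrow>\<^sub>0 nat) \<Rightarrow> ('v \<Rightarrow>\<^sub>0 nat) \<Rightarrow> bool" where
  "exp_gt \<beta> \<alpha> \<longleftrightarrow> exp_ge \<beta> \<alpha> \<and> \<beta> \<noteq> \<alpha>"

text \<open>Admissible cover {S_0,...,S_m} of S = {c_alpha nonzero}; the family is indexed by
  the exponents alpha, so each S_l is given as a set of exponents.\<close>
definition admissible_cover ::
  "('v::finite,'a::comm_ring_1) mpoly \<Rightarrow> ('v,'a) mpoly \<Rightarrow> (nat \<Rightarrow> ('v \<Rightarrow>\<^sub>0 nat) set) \<Rightarrow> nat \<Rightarrow> bool" where
  "admissible_cover p q Sc m \<longleftrightarrow>
     (\<Union>i\<in>{0..m}. Sc i) = {\<alpha>. cf p q \<alpha> \<noteq> 0}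
     \<and> (\<forall>\<alpha>\<in>Sc 0. total_deg_le (cf p q \<alpha>) 1)
     \<and> (\<forall>l\<in>{1..m}. \<forall>\<alpha>\<in>Sc l. \<forall>\<beta>. exp_gt \<beta> \<alpha> \<and> cf p q \<beta> \<noteq> 0 \<longrightarrow> \<beta> \<in> (\<Union>i\<in>{0..<l}. Sc i))"

end

theory Submission
  imports Defs "HOL-Computational_Algebra.Polynomial" "HOL-Library.FuncSet"
begin

text \<open>Write \<open>c\<^sub>\<alpha>(a) = P\<^sub>\<alpha>(a) - q\<^sub>\<alpha>\<close>, where \<open>P\<^sub>\<alpha>(a)\<close> is the coefficient of \<open>x\<^sup>\<alpha>\<close> in \<open>p(x + a)\<close>.
  Taylor expansion gives \<open>P\<^sub>\<alpha>(a + r) = \<Sum>\<^sub>\<nu> binom(\<alpha> + \<nu>, \<nu>) P\<^sub>\<alpha>\<^sub>+\<^sub>\<nu>(r) a\<^sup>\<nu>\<close>. By admissibility every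
  nonzero \<open>c\<^sub>\<beta>\<close> with \<open>\<beta> > \<alpha>\<close> lies in an earlier part of the cover, so it vanishes at \<open>r\<close> and \<open>s\<close>;
  hence \<open>P\<^sub>\<alpha>\<^sub>+\<^sub>\<nu>(r) = P\<^sub>\<alpha>\<^sub>+\<^sub>\<nu>(s)\<close> for \<open>\<nu> \<noteq> 0\<close>, and \<open>c\<^sub>\<alpha>(a + r) - c\<^sub>\<alpha>(a + s)\<close> does not depend on \<open>a\<close>.
  For any polynomial with this property, its part \<open>h\<close> of degree \<open>\<ge> 2\<close> satisfies
  \<open>h(b + d) = h(b) + C\<close> with \<open>d = r - s\<close>, \<open>C = h(r) - h(s)\<close>. Then \<open>t \<mapsto> h(t d)\<close> is a polynomial
  without linear term that equals \<open>t C\<close> at every natural \<open>t\<close>, so \<open>C = 0\<close> in characteristic zero,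
  which is exactly \<open>L\<^sub>a\<^sub>=\<^sub>r(c\<^sub>\<alpha>) = L\<^sub>a\<^sub>=\<^sub>s(c\<^sub>\<alpha>)\<close>. Coefficients in \<open>S\<^sub>0\<close> have no part of degree \<open>\<ge> 2\<close>.\<close>

definition exp_box :: "nat \<Rightarrow> ('v \<Rightarrow> nat) set" where
  "exp_box N = {\<mu>. \<forall>i. \<mu> i \<le> N}"

definition mpow :: "('v::finite \<Rightarrow> 'a::comm_ring_1) \<Rightarrow> ('v \<Rightarrow> nat) \<Rightarrow> 'a" where
  "mpow a \<mu> = (\<Prod>i\<in>UNIV. a i ^ \<mu> i)"

definition exp_deg :: "('v::finite \<Rightarrow> nat) \<Rightarrow> nat" where
  "exp_deg \<mu> = (\<Sum>i\<in>UNIV. \<mu> i)"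

definition multi_choose :: "('v::finite \<Rightarrow> nat) \<Rightarrow> ('v \<Rightarrow> nat) \<Rightarrow> 'a::comm_ring_1" where
  "multi_choose \<mu> \<nu> = (\<Prod>i\<in>UNIV. of_nat (\<mu> i choose \<nu> i))"

definition shift_binom :: "('v::finite \<Rightarrow> nat) \<Rightarrow> ('v \<Rightarrow> nat) \<Rightarrow> 'a::comm_ring_1" where
  "shift_binom \<alpha> \<mu> = (\<Prod>i\<in>UNIV. of_nat ((\<alpha> i + \<mu> i) choose \<mu> i))"

lemma finite_exp_below: "finite {\<kappa>::'v::finite \<Rightarrow> nat. \<forall>i. \<kappa> i \<le> b i}"
proof -
  have "{\<kappa>::'v \<Rightarrow> nat. \<forall>i. \<kappa> i \<le> b i} = PiE UNIV (\<lambda>i. {..b i})"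
    by (auto simp: PiE_UNIV_domain)
  then show ?thesis by (simp add: finite_PiE)
qed

lemma finite_exp_box: "finite (exp_box N :: ('v::finite \<Rightarrow> nat) set)"
  using finite_exp_below[of "\<lambda>_. N"] by (simp add: exp_box_def)

lemma zero_in_exp_box [simp]: "(\<lambda>_. 0) \<in> exp_box N"
  by (simp add: exp_box_def)

lemma mpow_zero [simp]: "mpow a (\<lambda>_. 0) = 1"
  by (simp add: mpow_def)

lemma shift_binom_zero [simp]: "shift_binom \<alpha> (\<lambda>_. 0) = 1"
  by (simp add: shift_binom_def)

lemma exp_deg_eq_0_iff: "exp_deg \<nu> = 0 \<longleftrightarrow> \<nu> = (\<lambda>_. 0)"
  by (auto simp: exp_deg_def fun_eq_iff)

lemma mpow_scale: "mpow (\<lambda>i. t * d i) \<mu> = t ^ exp_deg \<mu> * mpow d \<mu>"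
  by (simp add: mpow_def exp_deg_def power_mult_distrib prod.distrib power_sum)

lemma mpow_add_exp_deg_1:
  assumes "exp_deg \<mu> = 1"
  shows "mpow (\<lambda>i. a i + b i) \<mu> = mpow a \<mu> + mpow b \<mu>"
proof -
  obtain j where "\<mu> j = 1" and "\<And>i. i \<noteq> j \<Longrightarrow> \<mu> i = 0"
    using assms by (auto simp: exp_deg_def sum_eq_Suc0_iff)
  then have "\<mu> = (\<lambda>i. if i = j then 1 else 0)"
    by auto
  then show ?thesis
    by (simp add: mpow_def if_distrib prod.delta cong: if_cong)
qed

lemma mpow_add_expand:
  "mpow (\<lambda>i. a i + r i) \<mu>
     = (\<Sum>\<nu>\<in>{\<nu>. \<forall>i. \<nu> i \<le> \<mu> i}. multi_choose \<mu> \<nu> * mpow a \<nu> * mpow r (\<lambda>i. \<mu> i - \<nu> i))"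
proof -
  have "mpow (\<lambda>i. a i + r i) \<mu>
      = (\<Prod>i\<in>UNIV. \<Sum>k\<in>{..\<mu> i}. of_nat (\<mu> i choose k) * a i ^ k * r i ^ (\<mu> i - k))"
    unfolding mpow_def by (simp add: binomial_ring)
  also have "\<dots> = (\<Sum>g\<in>PiE UNIV (\<lambda>i. {..\<mu> i}).
                     \<Prod>i\<in>UNIV. of_nat (\<mu> i choose g i) * a i ^ g i * r i ^ (\<mu> i - g i))"
    by (rule prod_sum_PiE) auto
  also have "PiE UNIV (\<lambda>i. {..\<mu> i}) = {\<nu>. \<forall>i. \<nu> i \<le> \<mu> i}"
    by (auto simp: PiE_UNIV_domain)
  finally show ?thesis
    by (simp add: multi_choose_def mpow_def prod.distrib)
qed

lemma choose_mult_choose_assoc: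
  "((x + (y + z)) choose (y + z)) * ((y + z) choose y) = ((x + y) choose y) * ((x + y + z) choose z)"
proof -
  have fact_add: "fact (a + b) = fact a * fact b * ((a + b) choose b)" for a b :: nat
    using binomial_fact_lemma[of b "a + b"] by (simp add: ac_simps)
  have "fact x * fact y * fact z * (((x + (y + z)) choose (y + z)) * ((y + z) choose y)) = fact (x + y + z)"
    using fact_add[of x "y + z"] fact_add[of z y] by (simp add: ac_simps)
  moreover have "fact x * fact y * fact z * (((x + y) choose y) * ((x + y + z) choose z)) = fact (x + y + z)"
    using fact_add[of x y] fact_add[of "x + y" z] by (simp add: ac_simps)
  ultimately show ?thesis
    by (metis (no_types, lifting) fact_nonzero mult_cancel_left mult_eq_0_iff)
qed

lemma shift_binom_mult_multi_choose:
  "shift_binom \<alpha> (\<lambda>i. \<nu> i + \<kappa> i) * multi_choose (\<lambda>i. \<nu> i + \<kappa> i) \<nu>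
     = (shift_binom \<alpha> \<nu> * shift_binom (\<lambda>i. \<alpha> i + \<nu> i) \<kappa> :: 'a::comm_ring_1)"
  unfolding shift_binom_def multi_choose_def prod.distrib[symmetric] of_nat_mult[symmetric]
  by (simp only: choose_mult_choose_assoc)

text \<open>When \<open>P\<close> is the coefficient function of \<open>p\<close> and vanishes outside the box, this is the
  coefficient of \<open>x\<^sup>\<beta>\<close> in \<open>p(x + a)\<close>.\<close>

definition shift_coeff ::
  "(('v::finite \<Rightarrow> nat) \<Rightarrow> 'a::comm_ring_1) \<Rightarrow> nat \<Rightarrow> ('v \<Rightarrow> nat) \<Rightarrow> ('v \<Rightarrow> 'a) \<Rightarrow> 'a" where
  "shift_coeff P N \<beta> a = (\<Sum>\<mu>\<in>exp_box N. P (\<lambda>i. \<beta> i + \<mu> i) * shift_binom \<beta> \<mu> * mpow a \<mu>)"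

lemma sum_exp_box_above:
  fixes \<nu> :: "'v::finite \<Rightarrow> nat"
  assumes vanish: "\<And>\<kappa>. \<kappa> \<in> exp_box N \<Longrightarrow> (\<lambda>i. \<nu> i + \<kappa> i) \<notin> exp_box N \<Longrightarrow> g (\<lambda>i. \<nu> i + \<kappa> i) = 0"
  shows "(\<Sum>\<mu>\<in>{\<mu>\<in>exp_box N. \<forall>i. \<nu> i \<le> \<mu> i}. g \<mu>) = (\<Sum>\<kappa>\<in>exp_box N. g (\<lambda>i. \<nu> i + \<kappa> i))"
proof -
  let ?h = "\<lambda>\<kappa>::'v \<Rightarrow> nat. \<lambda>i. \<nu> i + \<kappa> i"
  have "inj ?h"
    by (auto simp: inj_def fun_eq_iff)
  moreover have "{\<mu>\<in>exp_box N. \<forall>i. \<nu> i \<le> \<mu> i} = ?h ` {\<kappa>\<in>exp_box N. ?h \<kappa> \<in> exp_box N}"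
  proof (intro set_eqI iffI)
    fix \<mu> assume \<mu>: "\<mu> \<in> {\<mu>\<in>exp_box N. \<forall>i. \<nu> i \<le> \<mu> i}"
    show "\<mu> \<in> ?h ` {\<kappa>\<in>exp_box N. ?h \<kappa> \<in> exp_box N}"
    proof (rule image_eqI[where x = "\<lambda>i. \<mu> i - \<nu> i"])
      show "\<mu> = ?h (\<lambda>i. \<mu> i - \<nu> i)"
        using \<mu> by (auto simp: fun_eq_iff)
      then show "(\<lambda>i. \<mu> i - \<nu> i) \<in> {\<kappa>\<in>exp_box N. ?h \<kappa> \<in> exp_box N}"
        using \<mu> by (auto simp: exp_box_def intro: le_trans[OF diff_le_self])
    qed
  next
    fix \<mu> assume "\<mu> \<in> ?h ` {\<kappa>\<in>exp_box N. ?h \<kappa> \<in> exp_box N}"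
    then obtain \<kappa> where "\<mu> = ?h \<kappa>" "?h \<kappa> \<in> exp_box N"
      by blast
    then show "\<mu> \<in> {\<mu>\<in>exp_box N. \<forall>i. \<nu> i \<le> \<mu> i}"
      by (simp only: mem_Collect_eq le_add1 simp_thms)
  qed
  ultimately have "(\<Sum>\<mu>\<in>{\<mu>\<in>exp_box N. \<forall>i. \<nu> i \<le> \<mu> i}. g \<mu>)
      = (\<Sum>\<kappa>\<in>{\<kappa>\<in>exp_box N. ?h \<kappa> \<in> exp_box N}. g (?h \<kappa>))"
    by (simp add: sum.reindex inj_on_subset)
  also have "\<dots> = (\<Sum>\<kappa>\<in>exp_box N. g (?h \<kappa>))"
    by (rule sum.mono_neutral_left[OF finite_exp_box]) (auto intro: vanish)
  finally show ?thesis .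
qed

lemma sum_exp_box_sum_below_swap:
  fixes g :: "('v::finite \<Rightarrow> nat) \<Rightarrow> ('v \<Rightarrow> nat) \<Rightarrow> 'a::comm_monoid_add"
  assumes vanish: "\<And>\<nu> \<kappa>. (\<lambda>i. \<nu> i + \<kappa> i) \<notin> exp_box N \<Longrightarrow> g (\<lambda>i. \<nu> i + \<kappa> i) \<nu> = 0"
  shows "(\<Sum>\<mu>\<in>exp_box N. \<Sum>\<nu>\<in>{\<nu>. \<forall>i. \<nu> i \<le> \<mu> i}. g \<mu> \<nu>)
       = (\<Sum>\<nu>\<in>exp_box N. \<Sum>\<kappa>\<in>exp_box N. g (\<lambda>i. \<nu> i + \<kappa> i) \<nu>)"
proof -
  have below: "{\<nu>. \<forall>i. \<nu> i \<le> \<mu> i} = {\<nu>\<in>exp_box N. \<forall>i. \<nu> i \<le> \<mu> i}" if "\<mu> \<in> exp_box N" for \<mu>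
    using that by (auto simp: exp_box_def intro: order_trans)
  have "(\<Sum>\<mu>\<in>exp_box N. \<Sum>\<nu>\<in>{\<nu>. \<forall>i. \<nu> i \<le> \<mu> i}. g \<mu> \<nu>)
      = (\<Sum>\<mu>\<in>exp_box N. \<Sum>\<nu>\<in>{\<nu>\<in>exp_box N. \<forall>i. \<nu> i \<le> \<mu> i}. g \<mu> \<nu>)"
    by (rule sum.cong) (simp_all add: below)
  also have "\<dots> = (\<Sum>\<nu>\<in>exp_box N. \<Sum>\<mu>\<in>{\<mu>\<in>exp_box N. \<forall>i. \<nu> i \<le> \<mu> i}. g \<mu> \<nu>)"
    by (rule sum.swap_restrict[OF finite_exp_box finite_exp_box])
  also have "\<dots> = (\<Sum>\<nu>\<in>exp_box N. \<Sum>\<kappa>\<in>exp_box N. g (\<lambda>i. \<nu> i + \<kappa> i) \<nu>)"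
    by (intro sum.cong refl sum_exp_box_above vanish)
  finally show ?thesis .
qed

lemma shift_coeff_translate:
  fixes P :: "('v::finite \<Rightarrow> nat) \<Rightarrow> 'a::comm_ring_1"
  assumes supp: "\<And>\<gamma>. P \<gamma> \<noteq> 0 \<Longrightarrow> \<gamma> \<in> exp_box N"
  shows "shift_coeff P N \<alpha> (\<lambda>i. a i + r i)
     = (\<Sum>\<nu>\<in>exp_box N. shift_binom \<alpha> \<nu> * shift_coeff P N (\<lambda>i. \<alpha> i + \<nu> i) r * mpow a \<nu>)"
proof -
  let ?g = "\<lambda>\<mu> \<nu>. P (\<lambda>i. \<alpha> i + \<mu> i) * shift_binom \<alpha> \<mu>
                   * (multi_choose \<mu> \<nu> * mpow a \<nu> * mpow r (\<lambda>i. \<mu> i - \<nu> i))"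
  have regroup: "?g (\<lambda>i. \<nu> i + \<kappa> i) \<nu> = shift_binom \<alpha> \<nu> * mpow a \<nu>
      * (P (\<lambda>i. \<alpha> i + \<nu> i + \<kappa> i) * shift_binom (\<lambda>i. \<alpha> i + \<nu> i) \<kappa> * mpow r \<kappa>)" for \<nu> \<kappa>
  proof -
    have "?g (\<lambda>i. \<nu> i + \<kappa> i) \<nu> = P (\<lambda>i. \<alpha> i + (\<nu> i + \<kappa> i))
        * (shift_binom \<alpha> (\<lambda>i. \<nu> i + \<kappa> i) * multi_choose (\<lambda>i. \<nu> i + \<kappa> i) \<nu>) * mpow a \<nu> * mpow r \<kappa>"
      by (simp add: mult_ac)
    also have "\<dots> = P (\<lambda>i. \<alpha> i + (\<nu> i + \<kappa> i))
        * (shift_binom \<alpha> \<nu> * shift_binom (\<lambda>i. \<alpha> i + \<nu> i) \<kappa>) * mpow a \<nu> * mpow r \<kappa>"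
      by (simp only: shift_binom_mult_multi_choose)
    finally show ?thesis
      by (simp add: add.assoc mult_ac)
  qed
  have "shift_coeff P N \<alpha> (\<lambda>i. a i + r i) = (\<Sum>\<mu>\<in>exp_box N. \<Sum>\<nu>\<in>{\<nu>. \<forall>i. \<nu> i \<le> \<mu> i}. ?g \<mu> \<nu>)"
    unfolding shift_coeff_def mpow_add_expand sum_distrib_left ..
  also have "\<dots> = (\<Sum>\<nu>\<in>exp_box N. \<Sum>\<kappa>\<in>exp_box N. ?g (\<lambda>i. \<nu> i + \<kappa> i) \<nu>)"
  proof (rule sum_exp_box_sum_below_swap)
    fix \<nu> \<kappa> :: "'v \<Rightarrow> nat"
    assume "(\<lambda>i. \<nu> i + \<kappa> i) \<notin> exp_box N"
    then have "(\<lambda>i. \<alpha> i + (\<nu> i + \<kappa> i)) \<notin> exp_box N"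
      by (auto simp: exp_box_def intro: le_trans[OF le_add2])
    then have "P (\<lambda>i. \<alpha> i + (\<nu> i + \<kappa> i)) = 0"
      using supp by blast
    then show "?g (\<lambda>i. \<nu> i + \<kappa> i) \<nu> = 0"
      by simp
  qed
  also have "\<dots> = (\<Sum>\<nu>\<in>exp_box N. shift_binom \<alpha> \<nu> * shift_coeff P N (\<lambda>i. \<alpha> i + \<nu> i) r * mpow a \<nu>)"
    unfolding regroup by (simp add: shift_coeff_def sum_distrib_left mult_ac)
  finally show ?thesis .
qed

lemma shift_coeff_translation_invariant:
  fixes P :: "('v::finite \<Rightarrow> nat) \<Rightarrow> 'a::comm_ring_1"
  assumes supp: "\<And>\<gamma>. P \<gamma> \<noteq> 0 \<Longrightarrow> \<gamma> \<in> exp_box N"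
    and higher: "\<And>\<nu>. \<nu> \<noteq> (\<lambda>_. 0) \<Longrightarrow>
                   shift_coeff P N (\<lambda>i. \<alpha> i + \<nu> i) r = shift_coeff P N (\<lambda>i. \<alpha> i + \<nu> i) s"
  shows "shift_coeff P N \<alpha> (\<lambda>i. a i + r i) - shift_coeff P N \<alpha> (\<lambda>i. a i + s i)
       = shift_coeff P N \<alpha> r - shift_coeff P N \<alpha> s"
proof -
  let ?rest = "\<lambda>t. \<Sum>\<nu>\<in>exp_box N - {\<lambda>_. 0}.
                  shift_binom \<alpha> \<nu> * shift_coeff P N (\<lambda>i. \<alpha> i + \<nu> i) t * mpow a \<nu>"
  have split: "shift_coeff P N \<alpha> (\<lambda>i. a i + t i) = shift_coeff P N \<alpha> t + ?rest t" for t
    using shift_coeff_translate[OF supp, where \<alpha>=\<alpha> and a=a and r=t]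
      sum.remove[OF finite_exp_box zero_in_exp_box,
        of "\<lambda>\<nu>. shift_binom \<alpha> \<nu> * shift_coeff P N (\<lambda>i. \<alpha> i + \<nu> i) t * mpow a \<nu>"]
    by simp
  have "?rest r = ?rest s"
    by (rule sum.cong) (simp_all add: higher)
  then show ?thesis
    unfolding split by simp
qed

lemma poly_linear_on_nat_coeff_1:
  fixes G :: "'a::field_char_0 poly"
  assumes "\<And>k::nat. poly G (of_nat k) = of_nat k * c"
  shows "coeff G 1 = c"
proof -
  have "range (of_nat :: nat \<Rightarrow> 'a) \<subseteq> {x. poly (G - [:0, c:]) x = 0}"
    using assms by (auto simp: algebra_simps)
  moreover have "infinite (range (of_nat :: nat \<Rightarrow> 'a))"
    using finite_imageD[OF _ inj_of_nat] by auto
  ultimately have "G - [:0, c:] = 0"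
    using poly_roots_finite finite_subset by blast
  then show ?thesis
    by simp
qed

lemma mdeg_eq_exp_deg: "mdeg m = exp_deg (Poly_Mapping.lookup m)"
  by (simp add: mdeg_def exp_deg_def)

lemma meval_eq_sum_mpow:
  "meval f a = (\<Sum>m\<in>Poly_Mapping.keys f. Poly_Mapping.lookup f m * mpow a (Poly_Mapping.lookup m))"
  by (simp add: meval_def mpow_def)

lemma meval_eq_sum_superset:
  assumes "finite S" "Poly_Mapping.keys f \<subseteq> S"
  shows "meval f a = (\<Sum>m\<in>S. Poly_Mapping.lookup f m * mpow a (Poly_Mapping.lookup m))"
  unfolding meval_eq_sum_mpow
  by (rule sum.mono_neutral_left[OF assms]) (auto simp: in_keys_iff)

lemma meval_add: "meval (f + g) a = meval f a + meval g a"
proof -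
  let ?S = "Poly_Mapping.keys f \<union> Poly_Mapping.keys g"
  have "meval (f + g) a = (\<Sum>m\<in>?S. Poly_Mapping.lookup (f + g) m * mpow a (Poly_Mapping.lookup m))"
    by (rule meval_eq_sum_superset) (use keys_add[of f g] in auto)
  moreover have "meval f a = (\<Sum>m\<in>?S. Poly_Mapping.lookup f m * mpow a (Poly_Mapping.lookup m))"
    by (rule meval_eq_sum_superset) auto
  moreover have "meval g a = (\<Sum>m\<in>?S. Poly_Mapping.lookup g m * mpow a (Poly_Mapping.lookup m))"
    by (rule meval_eq_sum_superset) auto
  ultimately show ?thesis
    by (simp add: lookup_add sum.distrib algebra_simps)
qed

lemma meval_mconst [simp]: "meval (mconst c) a = c"
  by (simp add: meval_def mconst_def)

lemma lookup_hcomp: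
  "Poly_Mapping.lookup (hcomp k f) m = (if mdeg m = k then Poly_Mapping.lookup f m else 0)"
  unfolding hcomp_def lookup_sum
  by (simp add: lookup_single when_def sum.delta' in_keys_iff)

lemma meval_hcomp:
  "meval (hcomp k f) a = (\<Sum>m\<in>Poly_Mapping.keys f.
      if mdeg m = k then Poly_Mapping.lookup f m * mpow a (Poly_Mapping.lookup m) else 0)"
proof -
  have "Poly_Mapping.keys (hcomp k f) \<subseteq> Poly_Mapping.keys f"
    by (auto simp: in_keys_iff lookup_hcomp split: if_splits)
  then show ?thesis
    by (subst meval_eq_sum_superset[of "Poly_Mapping.keys f"]) (auto simp: lookup_hcomp intro: sum.cong)
qed

lemma meval_hcomp_0:
  fixes f :: "('v::finite,'a::comm_ring_1) mpoly"
  shows "meval (hcomp 0 f) a = Poly_Mapping.lookup f 0"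
proof -
  have "mdeg m = 0 \<longleftrightarrow> m = 0" for m :: "'v \<Rightarrow>\<^sub>0 nat"
    by (simp add: mdeg_eq_exp_deg exp_deg_eq_0_iff poly_mapping_eq_iff fun_eq_iff)
  then show ?thesis
    by (simp add: meval_hcomp sum.delta' in_keys_iff mpow_def cong: if_cong)
qed

lemma meval_hcomp_1_add:
  "meval (hcomp 1 f) (\<lambda>i. a i + b i) = meval (hcomp 1 f) a + meval (hcomp 1 f) b"
  unfolding meval_hcomp sum.distrib[symmetric]
  by (rule sum.cong[OF refl]) (simp add: mdeg_eq_exp_deg mpow_add_exp_deg_1 algebra_simps)

definition higher_eval :: "('v::finite,'a::comm_ring_1) mpoly \<Rightarrow> ('v \<Rightarrow> 'a) \<Rightarrow> 'a" where
  "higher_eval f a = (\<Sum>m\<in>Poly_Mapping.keys f.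
      if 2 \<le> mdeg m then Poly_Mapping.lookup f m * mpow a (Poly_Mapping.lookup m) else 0)"

lemma meval_eq_hcomp_0_1_higher_eval:
  "meval f a = meval (hcomp 0 f) a + meval (hcomp 1 f) a + higher_eval f a"
  unfolding meval_hcomp higher_eval_def meval_eq_sum_mpow[of f] sum.distrib[symmetric]
  by (rule sum.cong[OF refl]) auto

lemma linearize_eq_higher_eval: "linearize a f = hcomp 0 f + hcomp 1 f + mconst (higher_eval f a)"
proof -
  let ?g = "\<lambda>m. Poly_Mapping.lookup f m * mpow a (Poly_Mapping.lookup m)"
  let ?M = "{m\<in>Poly_Mapping.keys f. 2 \<le> mdeg m}"
  let ?K = "{k \<in> mdeg ` Poly_Mapping.keys f. 2 \<le> k}"
  have "(\<Sum>k\<in>?K. meval (hcomp k f) a) = (\<Sum>k\<in>?K. \<Sum>m\<in>{m \<in> ?M. mdeg m = k}. ?g m)"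
  proof (rule sum.cong[OF refl])
    fix k assume "k \<in> ?K"
    then have "{m \<in> ?M. mdeg m = k} = {m\<in>Poly_Mapping.keys f. mdeg m = k}"
      by auto
    then show "meval (hcomp k f) a = (\<Sum>m\<in>{m \<in> ?M. mdeg m = k}. ?g m)"
      unfolding meval_hcomp by (simp only: sum.inter_filter[OF finite_keys])
  qed
  also have "\<dots> = (\<Sum>m\<in>?M. ?g m)"
    by (rule sum.group) auto
  also have "\<dots> = higher_eval f a"
    unfolding higher_eval_def by (simp add: sum.inter_filter)
  finally show ?thesis
    unfolding linearize_def by simp
qed

lemma meval_linearize_self: "meval (linearize a f) a = meval f a"
  by (simp add: linearize_eq_higher_eval meval_add meval_eq_hcomp_0_1_higher_eval[of f])

lemma higher_eval_on_line:
  "\<exists>G. (\<forall>t. higher_eval f (\<lambda>i. t * d i) = poly G t) \<and> coeff G 0 = 0 \<and> coeff G 1 = 0"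
proof (intro exI conjI allI)
  let ?G = "\<Sum>m\<in>Poly_Mapping.keys f. if 2 \<le> mdeg m
              then Polynomial.monom (Poly_Mapping.lookup f m * mpow d (Poly_Mapping.lookup m)) (mdeg m) else 0"
  show "higher_eval f (\<lambda>i. t * d i) = poly ?G t" for t
    unfolding higher_eval_def poly_sum
    by (rule sum.cong[OF refl]) (simp add: poly_monom mpow_scale mdeg_eq_exp_deg mult_ac)
  show "coeff ?G 0 = 0" "coeff ?G 1 = 0"
    by (auto simp: coeff_sum coeff_monom intro!: sum.neutral)
qed

lemma higher_eval_eq_if_translation_invariant:
  fixes f :: "('v::finite,'a::field_char_0) mpoly"
  assumes invariant: "\<And>a. meval f (\<lambda>i. a i + r i) - meval f (\<lambda>i. a i + s i) = meval f r - meval f s"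
  shows "higher_eval f r = higher_eval f s"
proof -
  let ?h = "higher_eval f"
  define d where "d = (\<lambda>i. r i - s i)"
  define C where "C = ?h r - ?h s"
  have meval_split: "meval f b = Poly_Mapping.lookup f 0 + meval (hcomp 1 f) b + ?h b" for b
    using meval_eq_hcomp_0_1_higher_eval[of f b] by (simp add: meval_hcomp_0)
  have h_translate: "?h (\<lambda>i. a i + r i) - ?h (\<lambda>i. a i + s i) = C" for a
    using invariant[of a] unfolding meval_split meval_hcomp_1_add C_def by (simp add: algebra_simps)
  have h_step: "?h (\<lambda>i. b i + d i) = ?h b + C" for b
    using h_translate[of "\<lambda>i. b i - s i"] by (simp add: d_def algebra_simps)
  obtain G where G: "\<And>t. ?h (\<lambda>i. t * d i) = poly G t" "coeff G 0 = 0" "coeff G 1 = 0"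
    using higher_eval_on_line by blast
  have "poly G (of_nat k) = of_nat k * C" for k
  proof (induction k)
    case 0
    then show ?case
      using G(2) by (simp add: poly_0_coeff_0)
  next
    case (Suc k)
    have "(\<lambda>i. of_nat (Suc k) * d i) = (\<lambda>i. of_nat k * d i + d i)"
      by (simp add: algebra_simps)
    then show ?case
      using h_step[of "\<lambda>i. of_nat k * d i"] Suc by (simp add: G(1)[symmetric] algebra_simps)
  qed
  then have "C = 0"
    using poly_linear_on_nat_coeff_1 G(3) by metis
  then show ?thesis
    by (simp add: C_def)
qed

abbreviation pm_of :: "('v::finite \<Rightarrow> nat) \<Rightarrow> ('v \<Rightarrow>\<^sub>0 nat)" where
  "pm_of f \<equiv> Abs_poly_mapping f"

lemma lookup_pm_of [simp]: "Poly_Mapping.lookup (pm_of (f::'v::finite \<Rightarrow> nat)) = f"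
  by (simp add: lookup_Abs_poly_mapping)

lemma pm_of_lookup [simp]: "pm_of (Poly_Mapping.lookup m) = m"
  by (simp add: lookup_inverse)

lemma lookup_mconst_mult:
  "Poly_Mapping.lookup (mconst s * p) k = (s::'b::comm_semiring_1) * Poly_Mapping.lookup p k"
  unfolding mconst_def mult_map_scale_conv_mult[symmetric] by (simp add: map.rep_eq when_def)

lemma prod_single:
  fixes a :: "'i \<Rightarrow> 'k::comm_monoid_add" and b :: "'i \<Rightarrow> 'b::comm_semiring_1"
  shows "finite I \<Longrightarrow> (\<Prod>i\<in>I. Poly_Mapping.single (a i) (b i)) = Poly_Mapping.single (\<Sum>i\<in>I. a i) (\<Prod>i\<in>I. b i)"
  by (induction I rule: finite_induct) (simp_all add: mult_single)

lemma sum_single_eq_pm_of: "(\<Sum>i\<in>UNIV. Poly_Mapping.single i (g i)) = pm_of (g :: 'v::finite \<Rightarrow> nat)"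
  by (rule poly_mapping_eqI) (simp add: lookup_sum lookup_single when_def)

lemma mvar_power: "mvar i ^ k = Poly_Mapping.single (Poly_Mapping.single i k) 1"
  by (induction k) (simp_all add: mvar_def mult_single single_add[symmetric] add.commute)

lemma mconst_power: "mconst c ^ k = mconst (c ^ k)"
  by (induction k) (simp_all add: mconst_def mult_single)

lemma power_var_add_shift_var:
  fixes i :: 'v
  shows "(mvar i + mconst (mvar i)) ^ n
     = (\<Sum>k\<le>n. Poly_Mapping.single (Poly_Mapping.single i k)
          (Poly_Mapping.single (Poly_Mapping.single i (n - k)) (of_nat (n choose k) :: 'a::comm_ring_1)))"
  unfolding binomial_ring mconst_power mvar_power
  by (simp add: mconst_def mult_single flip: single_of_nat)

lemma prod_power_var_add_shift_var:
  fixes \<beta> :: "'v::finite \<Rightarrow>\<^sub>0 nat"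
  shows "(\<Prod>i\<in>UNIV. (mvar i + mconst (mvar i)) ^ Poly_Mapping.lookup \<beta> i :: ('v, ('v,'a::comm_ring_1) mpoly) mpoly)
    = (\<Sum>\<kappa>\<in>{\<kappa>. \<forall>i. \<kappa> i \<le> Poly_Mapping.lookup \<beta> i}. Poly_Mapping.single (pm_of \<kappa>)
         (Poly_Mapping.single (pm_of (\<lambda>i. Poly_Mapping.lookup \<beta> i - \<kappa> i)) (multi_choose (Poly_Mapping.lookup \<beta>) \<kappa>)))"
proof -
  let ?b = "Poly_Mapping.lookup \<beta>"
  have "(\<Prod>i\<in>UNIV. (mvar i + mconst (mvar i)) ^ ?b i :: ('v, ('v,'a) mpoly) mpoly)
     = (\<Prod>i\<in>UNIV. \<Sum>k\<in>{..?b i}. Poly_Mapping.single (Poly_Mapping.single i k)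
        (Poly_Mapping.single (Poly_Mapping.single i (?b i - k)) (of_nat (?b i choose k) :: 'a)))"
    by (simp only: power_var_add_shift_var atMost_def)
  also have "\<dots> = (\<Sum>g\<in>PiE UNIV (\<lambda>i. {..?b i}). \<Prod>i\<in>UNIV. Poly_Mapping.single (Poly_Mapping.single i (g i))
        (Poly_Mapping.single (Poly_Mapping.single i (?b i - g i)) (of_nat (?b i choose g i) :: 'a)))"
    by (rule prod_sum_PiE) auto
  also have "PiE UNIV (\<lambda>i. {..?b i}) = {\<kappa>. \<forall>i. \<kappa> i \<le> ?b i}"
    by (auto simp: PiE_UNIV_domain)
  also have "(\<Sum>g\<in>{\<kappa>. \<forall>i. \<kappa> i \<le> ?b i}. \<Prod>i\<in>UNIV. Poly_Mapping.single (Poly_Mapping.single i (g i))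
        (Poly_Mapping.single (Poly_Mapping.single i (?b i - g i)) (of_nat (?b i choose g i) :: 'a)))
     = (\<Sum>\<kappa>\<in>{\<kappa>. \<forall>i. \<kappa> i \<le> ?b i}. Poly_Mapping.single (pm_of \<kappa>)
         (Poly_Mapping.single (pm_of (\<lambda>i. ?b i - \<kappa> i)) (multi_choose ?b \<kappa>)))"
    by (simp only: prod_single[OF finite_UNIV] sum_single_eq_pm_of multi_choose_def)
  finally show ?thesis .
qed

lemma lookup_prod_power_var_add_shift_var:
  fixes \<alpha> \<beta> \<mu> :: "'v::finite \<Rightarrow>\<^sub>0 nat"
  shows "Poly_Mapping.lookup (Poly_Mapping.lookup
     (\<Prod>i\<in>UNIV. (mvar i + mconst (mvar i)) ^ Poly_Mapping.lookup \<beta> i :: ('v, ('v,'a::comm_ring_1) mpoly) mpoly) \<alpha>) \<mu>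
   = (if \<beta> = \<alpha> + \<mu> then multi_choose (Poly_Mapping.lookup \<beta>) (Poly_Mapping.lookup \<alpha>) else 0)"
proof -
  let ?b = "Poly_Mapping.lookup \<beta>" and ?a = "Poly_Mapping.lookup \<alpha>"
  let ?X = "\<lambda>\<kappa>. Poly_Mapping.single (pm_of (\<lambda>i. ?b i - \<kappa> i)) (multi_choose ?b \<kappa> :: 'a)"
  have "Poly_Mapping.lookup (\<Sum>\<kappa>\<in>{\<kappa>. \<forall>i. \<kappa> i \<le> ?b i}. Poly_Mapping.single (pm_of \<kappa>) (?X \<kappa>)) \<alpha>
      = (\<Sum>\<kappa>\<in>{\<kappa>. \<forall>i. \<kappa> i \<le> ?b i}. if \<kappa> = ?a then ?X \<kappa> else 0)"
    unfolding lookup_sum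
  proof (rule sum.cong[OF refl])
    fix \<kappa> :: "'v \<Rightarrow> nat"
    have "(pm_of \<kappa> = \<alpha>) = (\<kappa> = ?a)" by (metis lookup_pm_of pm_of_lookup)
    then show "Poly_Mapping.lookup (Poly_Mapping.single (pm_of \<kappa>) (?X \<kappa>)) \<alpha> = (if \<kappa> = ?a then ?X \<kappa> else 0)"
      by (simp add: lookup_single when_def)
  qed
  also have "\<dots> = (if ?a \<in> {\<kappa>. \<forall>i. \<kappa> i \<le> ?b i} then ?X ?a else 0)"
    by (rule sum.delta[OF finite_exp_below])
  finally have e: "Poly_Mapping.lookup (\<Sum>\<kappa>\<in>{\<kappa>. \<forall>i. \<kappa> i \<le> ?b i}. Poly_Mapping.single (pm_of \<kappa>) (?X \<kappa>)) \<alpha>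
      = (if \<forall>i. ?a i \<le> ?b i then ?X ?a else 0)" by simp
  have iff: "((\<forall>i. ?a i \<le> ?b i) \<and> pm_of (\<lambda>i. ?b i - ?a i) = \<mu>) = (\<beta> = \<alpha> + \<mu>)"
  proof
    assume h: "(\<forall>i. ?a i \<le> ?b i) \<and> pm_of (\<lambda>i. ?b i - ?a i) = \<mu>"
    then have "Poly_Mapping.lookup \<mu> = (\<lambda>i. ?b i - ?a i)" by auto
    then show "\<beta> = \<alpha> + \<mu>" using h by (intro poly_mapping_eqI) (simp add: lookup_add)
  next
    assume "\<beta> = \<alpha> + \<mu>"
    then have "?b = (\<lambda>i. ?a i + Poly_Mapping.lookup \<mu> i)" by (simp add: lookup_add fun_eq_iff)
    then show "(\<forall>i. ?a i \<le> ?b i) \<and> pm_of (\<lambda>i. ?b i - ?a i) = \<mu>" by simp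
  qed
  show ?thesis
    unfolding prod_power_var_add_shift_var e using iff
    by (auto simp: lookup_single when_def)
qed

lemma lookup_shift_poly:
  fixes \<alpha> \<mu> :: "'v::finite \<Rightarrow>\<^sub>0 nat" and p :: "('v,'a::comm_ring_1) mpoly"
  shows "Poly_Mapping.lookup (Poly_Mapping.lookup (shift_poly p) \<alpha>) \<mu>
     = Poly_Mapping.lookup p (\<alpha> + \<mu>) * multi_choose (Poly_Mapping.lookup (\<alpha> + \<mu>)) (Poly_Mapping.lookup \<alpha>)"
proof -
  have "Poly_Mapping.lookup (Poly_Mapping.lookup (shift_poly p) \<alpha>) \<mu>
      = (\<Sum>\<beta>\<in>Poly_Mapping.keys p. if \<beta> = \<alpha> + \<mu>
           then Poly_Mapping.lookup p \<beta> * multi_choose (Poly_Mapping.lookup \<beta>) (Poly_Mapping.lookup \<alpha>) else 0)"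
    unfolding shift_poly_def lookup_sum
    by (rule sum.cong[OF refl]) (simp add: lookup_mconst_mult lookup_prod_power_var_add_shift_var)
  also have "\<dots> = Poly_Mapping.lookup p (\<alpha> + \<mu>) * multi_choose (Poly_Mapping.lookup (\<alpha> + \<mu>)) (Poly_Mapping.lookup \<alpha>)"
    by (subst sum.delta[OF finite_keys]) (auto simp: in_keys_iff)
  finally show ?thesis .
qed

lemma lookup_lift_poly:
  fixes \<alpha> :: "'v::finite \<Rightarrow>\<^sub>0 nat" and q :: "('v,'a::comm_ring_1) mpoly"
  shows "Poly_Mapping.lookup (lift_poly q) \<alpha> = mconst (Poly_Mapping.lookup q \<alpha>)"
  unfolding lift_poly_def lookup_sum
  by (simp add: lookup_single when_def sum.delta in_keys_iff mconst_def)

lemma multi_choose_add_eq_shift_binom: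
  "multi_choose (Poly_Mapping.lookup (\<alpha> + \<mu>)) (Poly_Mapping.lookup \<alpha>)
     = (shift_binom (Poly_Mapping.lookup \<alpha>) (Poly_Mapping.lookup \<mu>) :: 'a::comm_ring_1)"
  unfolding multi_choose_def shift_binom_def lookup_add
  by (rule prod.cong[OF refl]) (metis add_diff_cancel_left' binomial_symmetric le_add1)

lemma lookup_cf:
  fixes \<alpha> \<mu> :: "'v::finite \<Rightarrow>\<^sub>0 nat" and p q :: "('v,'a::comm_ring_1) mpoly"
  shows "Poly_Mapping.lookup (cf p q \<alpha>) \<mu>
     = Poly_Mapping.lookup p (\<alpha> + \<mu>) * shift_binom (Poly_Mapping.lookup \<alpha>) (Poly_Mapping.lookup \<mu>)
       - (if \<mu> = 0 then Poly_Mapping.lookup q \<alpha> else 0)"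
proof -
  have "Poly_Mapping.lookup (mconst c) \<mu> = (if \<mu> = 0 then c else 0)" for c :: 'a
    by (auto simp: mconst_def lookup_single when_def)
  then show ?thesis
    unfolding cf_def lookup_minus lookup_shift_poly lookup_lift_poly multi_choose_add_eq_shift_binom
    by simp
qed

lemma sum_keys_eq_sum_exp_box:
  fixes f :: "('v::finite,'a::comm_ring_1) mpoly"
  assumes bounded: "\<And>m. m \<in> Poly_Mapping.keys f \<Longrightarrow> Poly_Mapping.lookup m \<in> exp_box N"
  shows "(\<Sum>m\<in>Poly_Mapping.keys f. Poly_Mapping.lookup f m * h m)
       = (\<Sum>\<nu>\<in>exp_box N. Poly_Mapping.lookup f (pm_of \<nu>) * h (pm_of \<nu>))"
proof -
  have inj: "inj_on pm_of (exp_box N :: ('v \<Rightarrow> nat) set)"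
    by (rule inj_onI) (metis lookup_pm_of)
  have "(\<Sum>\<nu>\<in>exp_box N. Poly_Mapping.lookup f (pm_of \<nu>) * h (pm_of \<nu>))
      = (\<Sum>m\<in>pm_of ` exp_box N. Poly_Mapping.lookup f m * h m)"
    by (rule sum.reindex[OF inj, unfolded comp_def, symmetric])
  also have "\<dots> = (\<Sum>m\<in>Poly_Mapping.keys f. Poly_Mapping.lookup f m * h m)"
  proof (rule sum.mono_neutral_right)
    show "finite (pm_of ` exp_box N)" by (simp add: finite_exp_box)
    show "Poly_Mapping.keys f \<subseteq> pm_of ` exp_box N"
      using bounded by (metis image_eqI pm_of_lookup subsetI)
  qed (auto simp: in_keys_iff)
  finally show ?thesis by simp
qed

lemma keys_cf_in_exp_box:
  fixes p q :: "('v::finite,'a::comm_ring_1) mpoly"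
  assumes bounded: "\<And>\<gamma>. \<gamma> \<in> Poly_Mapping.keys p \<Longrightarrow> Poly_Mapping.lookup \<gamma> \<in> exp_box N"
    and m: "m \<in> Poly_Mapping.keys (cf p q \<beta>)"
  shows "Poly_Mapping.lookup m \<in> exp_box N"
proof (cases "m = 0")
  case True
  then show ?thesis
    by (simp add: exp_box_def)
next
  case False
  with m have "Poly_Mapping.lookup p (\<beta> + m) \<noteq> 0" by (auto simp: in_keys_iff lookup_cf)
  then have "Poly_Mapping.lookup (\<beta> + m) \<in> exp_box N" using bounded by (simp add: in_keys_iff)
  then show ?thesis by (auto simp: exp_box_def lookup_add intro: le_trans[OF le_add2])
qed

lemma pm_of_eq_0_iff: "(pm_of \<nu> = 0) = (\<nu> = (\<lambda>_. 0::nat))"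
  by (auto simp: poly_mapping_eq_iff fun_eq_iff)

lemma meval_cf:
  fixes p q :: "('v::finite,'a::comm_ring_1) mpoly"
  assumes bounded: "\<And>\<gamma>. \<gamma> \<in> Poly_Mapping.keys p \<Longrightarrow> Poly_Mapping.lookup \<gamma> \<in> exp_box N"
  shows "meval (cf p q \<beta>) a
       = shift_coeff (\<lambda>\<nu>. Poly_Mapping.lookup p (pm_of \<nu>)) N (Poly_Mapping.lookup \<beta>) a - Poly_Mapping.lookup q \<beta>"
proof -
  let ?\<beta> = "Poly_Mapping.lookup \<beta>"
  have "meval (cf p q \<beta>) a = (\<Sum>\<nu>\<in>exp_box N. Poly_Mapping.lookup (cf p q \<beta>) (pm_of \<nu>) * mpow a \<nu>)"
    unfolding meval_eq_sum_mpow by (subst sum_keys_eq_sum_exp_box[OF keys_cf_in_exp_box[OF bounded]]) auto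
  also have "\<dots> = (\<Sum>\<nu>\<in>exp_box N. Poly_Mapping.lookup p (pm_of (\<lambda>i. ?\<beta> i + \<nu> i)) * shift_binom ?\<beta> \<nu> * mpow a \<nu>
       - (if \<nu> = (\<lambda>_. 0) then Poly_Mapping.lookup q \<beta> else 0))"
  proof (rule sum.cong[OF refl])
    fix \<nu> :: "'v \<Rightarrow> nat"
    have "\<beta> + pm_of \<nu> = pm_of (\<lambda>i. ?\<beta> i + \<nu> i)"
      by (rule poly_mapping_eqI) (simp add: lookup_add)
    then show "Poly_Mapping.lookup (cf p q \<beta>) (pm_of \<nu>) * mpow a \<nu>
        = Poly_Mapping.lookup p (pm_of (\<lambda>i. ?\<beta> i + \<nu> i)) * shift_binom ?\<beta> \<nu> * mpow a \<nu>
          - (if \<nu> = (\<lambda>_. 0) then Poly_Mapping.lookup q \<beta> else 0)"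
      by (simp add: lookup_cf pm_of_eq_0_iff algebra_simps)
  qed
  also have "\<dots> = shift_coeff (\<lambda>\<nu>. Poly_Mapping.lookup p (pm_of \<nu>)) N ?\<beta> a - Poly_Mapping.lookup q \<beta>"
    by (simp add: sum_subtractf shift_coeff_def finite_exp_box)
  finally show ?thesis .
qed

lemma keys_in_exp_box:
  fixes p :: "('v::finite,'a::zero) mpoly"
  obtains N where "\<And>\<gamma>. \<gamma> \<in> Poly_Mapping.keys p \<Longrightarrow> Poly_Mapping.lookup \<gamma> \<in> exp_box N"
proof -
  have "finite ((\<lambda>(\<gamma>, i). Poly_Mapping.lookup \<gamma> i) ` (Poly_Mapping.keys p \<times> UNIV))"
    by simp
  then obtain N where "\<forall>x \<in> (\<lambda>(\<gamma>, i). Poly_Mapping.lookup \<gamma> i) ` (Poly_Mapping.keys p \<times> UNIV). x \<le> N"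
    using finite_nat_set_iff_bounded_le by blast
  then have "Poly_Mapping.lookup \<gamma> \<in> exp_box N" if "\<gamma> \<in> Poly_Mapping.keys p" for \<gamma>
    using that by (force simp: exp_box_def)
  then show thesis
    using that by blast
qed

lemma higher_eval_eq_0_if_total_deg_le_1:
  "total_deg_le f 1 \<Longrightarrow> higher_eval f a = 0"
  unfolding higher_eval_def total_deg_le_def by (intro sum.neutral) auto

lemma higher_eval_cf_eq:
  fixes p q :: "('v::finite,'a::field_char_0) mpoly"
  assumes vanish: "\<And>\<beta>. exp_gt \<beta> \<alpha> \<Longrightarrow> meval (cf p q \<beta>) r = 0 \<and> meval (cf p q \<beta>) s = 0"
  shows "higher_eval (cf p q \<alpha>) r = higher_eval (cf p q \<alpha>) s"
proof -
  obtain N where N: "\<And>\<gamma>. \<gamma> \<in> Poly_Mapping.keys p \<Longrightarrow> Poly_Mapping.lookup \<gamma> \<in> exp_box N"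
    using keys_in_exp_box by blast
  let ?P = "\<lambda>\<nu>. Poly_Mapping.lookup p (pm_of \<nu>)"
  let ?\<alpha> = "Poly_Mapping.lookup \<alpha>"
  have supp: "?P \<gamma> \<noteq> 0 \<Longrightarrow> \<gamma> \<in> exp_box N" for \<gamma>
    using N[of "pm_of \<gamma>"] by (simp add: in_keys_iff)
  have higher: "shift_coeff ?P N (\<lambda>i. ?\<alpha> i + \<nu> i) r = shift_coeff ?P N (\<lambda>i. ?\<alpha> i + \<nu> i) s"
    if "\<nu> \<noteq> (\<lambda>_. 0)" for \<nu>
  proof -
    define \<beta> where "\<beta> = pm_of (\<lambda>i. ?\<alpha> i + \<nu> i)"
    have "exp_gt \<beta> \<alpha>"
      using that by (auto simp: \<beta>_def exp_gt_def exp_ge_def poly_mapping_eq_iff fun_eq_iff)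
    then show ?thesis
      using vanish[of \<beta>] meval_cf[OF N, where q=q and \<beta>=\<beta>] by (simp add: \<beta>_def)
  qed
  have "meval (cf p q \<alpha>) (\<lambda>i. a i + r i) - meval (cf p q \<alpha>) (\<lambda>i. a i + s i)
      = meval (cf p q \<alpha>) r - meval (cf p q \<alpha>) s" for a
    using shift_coeff_translation_invariant[OF supp higher, of a] by (simp add: meval_cf[OF N])
  then show ?thesis
    by (rule higher_eval_eq_if_translation_invariant)
qed

lemma admissible_cover_cf_vanishes_above:
  assumes "admissible_cover p q Sc m"
    and "i \<in> {1..m}" "i \<le> l" "\<alpha> \<in> Sc i"
    and "r \<in> zero_set (cf p q ` (\<Union>j\<in>{0..<l}. Sc j))"
    and "exp_gt \<beta> \<alpha>"
  shows "meval (cf p q \<beta>) r = 0"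
proof (cases "cf p q \<beta> = 0")
  case False
  then have "\<beta> \<in> (\<Union>j\<in>{0..<i}. Sc j)"
    using assms(1-4,6) unfolding admissible_cover_def by blast
  then have "\<beta> \<in> (\<Union>j\<in>{0..<l}. Sc j)"
    using assms(3) by auto
  then show ?thesis
    using assms(5) by (auto simp: zero_set_def)
qed (simp add: meval_def)

theorem mainTheorem5:
  fixes p q :: "('v::finite, 'a::field_char_0) mpoly"
    and Sc :: "nat \<Rightarrow> ('v \<Rightarrow>\<^sub>0 nat) set"
    and m l :: nat
    and r s :: "'v \<Rightarrow> 'a"
  assumes "admissible_cover p q Sc m"
    and "l \<le> m"
    and "r \<in> zero_set (cf p q ` (\<Union>i\<in>{0..<l}. Sc i))"
    and "s \<in> zero_set (cf p q ` (\<Union>i\<in>{0..<l}. Sc i))"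
    and "\<alpha> \<in> (\<Union>i\<in>{0..l}. Sc i)"
  shows "linearize r (cf p q \<alpha>) = linearize s (cf p q \<alpha>)
     \<and> meval (cf p q \<alpha>) r = meval (linearize s (cf p q \<alpha>)) r"
proof -
  obtain i where i: "i \<le> l" "\<alpha> \<in> Sc i"
    using assms(5) by auto
  have "higher_eval (cf p q \<alpha>) r = higher_eval (cf p q \<alpha>) s"
  proof (cases "i = 0")
    case True
    then have "total_deg_le (cf p q \<alpha>) 1"
      using assms(1) i(2) by (simp add: admissible_cover_def)
    then show ?thesis
      by (simp add: higher_eval_eq_0_if_total_deg_le_1)
  next
    case False
    then have "i \<in> {1..m}"
      using i(1) assms(2) by auto
    then show ?thesis
      using admissible_cover_cf_vanishes_above[OF assms(1) _ i(1,2)] assms(3,4)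
      by (intro higher_eval_cf_eq) blast
  qed
  then have "linearize r (cf p q \<alpha>) = linearize s (cf p q \<alpha>)"
    by (simp add: linearize_eq_higher_eval)
  then show ?thesis
    using meval_linearize_self[of r "cf p q \<alpha>"] by simp
qed

end
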